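(* Let $\Phi=\forall u_1\ldots\forall u_n\exists e_1(D_1)\ldots\exists e_m(D_m).\varphi$ be a DQBF with prefix $\mathcal{Q}$, let $A$ be a set of arbiter variables with arbiter clauses $\varphi_A$, and let $\Phi'=\mathcal{Q}\exists A(\emptyset).\varphi\wedge\varphi_A$. Then $\Phi$ is true if and only if $\Phi'$ is true.
   Context: For a set $V$ of variables, $[V]$ is the set of assignments $V\to\{\textsc{true},\textsc{false}\}$; assignments are identified with terms of the literals they make true, $\neg\sigma$ is the clause of the negations of these literals, and $\sigma|_W$ denotes restriction. A DQBF is $\forall u_1\ldots\forall u_n\exists e_1(D_1)\ldots\exists e_m(D_m).\varphi$ with pairwise distinct variables, $U=\{u_i\}$, $E=\{e_j\}$, dependency sets $D(e_j)=D_j\subseteq U$, and $\varphi$ a CNF over $U\cup E$; a model is a family $F=(F_e)_{e}$ with $F_e:[D(e)]\to\{\textsc{true},\textsc{false}\}$ such that for every $\sigma\in[U]$, $\sigma\cup F(\sigma)$ satisfies the matrix, where $F(\sigma)$ assigns each existential $e$ the value $F_e(\sigma|_{D(e)})$; the DQBF is true iff it has a model. Arbiter variables: for $e\in E$, $\sigma\in[D(e)]$, $e^\sigma$ is a fresh variable; for a set $A$ of them, $\varphi_A=\bigwedge_{e^\sigma\in A}\big((e^\sigma\vee\neg\sigma\vee\neg e)\wedge(\neg e^\sigma\vee\neg\sigma\vee e)\big)$. For a CNF $\psi$, $\mathcal{Q}\exists A(\emptyset).\psi$ is the DQBF whose prefix is that of $\Phi$ extended by every variable of $A$ as an existential variable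 with empty dependency set, and whose matrix is $\psi$. *)

theory Defs
  imports Main
begin

(* Literals are pairs (variable, polarity); (x, True) is x, (x, False) is \<not>x. *)

type_synonym 'x lit = "'x \<times> bool"
type_synonym 'x clause = "'x lit set"
type_synonym 'x cnf = "'x clause set"
type_synonym 'x assign = "'x \<rightharpoonup> bool"

definition sat_lit :: "'x assign \<Rightarrow> 'x lit \<Rightarrow> bool" where
  "sat_lit \<alpha> l = (\<alpha> (fst l) = Some (snd l))"

definition sat_clause :: "'x assign \<Rightarrow> 'x clause \<Rightarrow> bool" where
  "sat_clause \<alpha> C = (\<exists>l\<in>C. sat_lit \<alpha> l)"

definition sat_cnf :: "'x assign \<Rightarrow> 'x cnf \<Rightarrow> bool" where
  "sat_cnf \<alpha> \<phi> = (\<forall>C\<in>\<phi>. sat_clause \<alpha> C)"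

definition cnf_vars :: "'x cnf \<Rightarrow> 'x set" where
  "cnf_vars \<phi> = {fst l | l C. C \<in> \<phi> \<and> l \<in> C}"

definition assignments :: "'x set \<Rightarrow> 'x assign set" where
  "assignments V = {\<sigma>. dom \<sigma> = V}"

definition neg_term :: "'x assign \<Rightarrow> 'x clause" where
  "neg_term \<sigma> = {(v, \<not> b) | v b. \<sigma> v = Some b}"

(* A DQBF: universal variables, existential variables, dependency sets, CNF matrix.
   (The order of the prefix is irrelevant for the semantics.) *)
record 'x dqbf =
  univ :: "'x set"
  exis :: "'x set"
  dep :: "'x \<Rightarrow> 'x set"
  matrix :: "'x cnf"

definition wf_dqbf :: "'x dqbf \<Rightarrow> bool" where
  "wf_dqbf \<Phi> \<longleftrightarrow> finite (univ \<Phi>) \<and> finite (exis \<Phi>) \<and> univ \<Phi> \<inter> exis \<Phi> = {}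
     \<and> (\<forall>e\<in>exis \<Phi>. dep \<Phi> e \<subseteq> univ \<Phi>)
     \<and> finite (matrix \<Phi>) \<and> (\<forall>C\<in>matrix \<Phi>. finite C)
     \<and> cnf_vars (matrix \<Phi>) \<subseteq> univ \<Phi> \<union> exis \<Phi>"

definition skolem_assign :: "'x dqbf \<Rightarrow> ('x \<Rightarrow> 'x assign \<Rightarrow> bool) \<Rightarrow> 'x assign \<Rightarrow> 'x assign" where
  "skolem_assign \<Phi> F \<sigma> = (\<lambda>x. if x \<in> exis \<Phi> then Some (F x (\<sigma> |` dep \<Phi> x)) else None)"

(* F is a model; F e only matters on [D(e)] since \<sigma>|_{D(e)} \<in> [D(e)] *)
definition is_model :: "'x dqbf \<Rightarrow> ('x \<Rightarrow> 'x assign \<Rightarrow> bool) \<Rightarrow> bool" where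
  "is_model \<Phi> F \<longleftrightarrow> (\<forall>\<sigma>\<in>assignments (univ \<Phi>). sat_cnf (\<sigma> ++ skolem_assign \<Phi> F \<sigma>) (matrix \<Phi>))"

definition dqbf_true :: "'x dqbf \<Rightarrow> bool" where
  "dqbf_true \<Phi> \<longleftrightarrow> (\<exists>F. is_model \<Phi> F)"

(* Variables of the extended formula: original variables and fresh arbiter variables e^\<sigma> *)
datatype 'v avar = Orig 'v | Arb 'v "'v \<rightharpoonup> bool"

definition lift_lit :: "'v lit \<Rightarrow> 'v avar lit" where
  "lift_lit l = (Orig (fst l), snd l)"

definition lift_assign :: "'v assign \<Rightarrow> 'v avar assign" where
  "lift_assign \<sigma> = (\<lambda>x. case x of Orig v \<Rightarrow> \<sigma> v | Arb _ _ \<Rightarrow> None)"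

definition arbiter_index :: "'v dqbf \<Rightarrow> ('v \<times> 'v assign) set" where
  "arbiter_index \<Phi> = {(e, \<sigma>). e \<in> exis \<Phi> \<and> \<sigma> \<in> assignments (dep \<Phi> e)}"

(* \<phi>_A = \<And>_{e^\<sigma> \<in> A} (e^\<sigma> \<or> \<not>\<sigma> \<or> \<not>e) \<and> (\<not>e^\<sigma> \<or> \<not>\<sigma> \<or> e) *)
definition arbiter_clauses :: "('v \<times> 'v assign) set \<Rightarrow> 'v avar cnf" where
  "arbiter_clauses A =
     (\<Union>(e, \<sigma>)\<in>A.
        {insert (Arb e \<sigma>, True) (insert (Orig e, False) (neg_term (lift_assign \<sigma>))),
         insert (Arb e \<sigma>, False) (insert (Orig e, True) (neg_term (lift_assign \<sigma>)))})"

definition add_arbiters :: "'v dqbf \<Rightarrow> ('v \<times> 'v assign) set \<Rightarrow> 'v avar dqbf" where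
  "add_arbiters \<Phi> A =
     \<lparr> univ = Orig ` univ \<Phi>,
       exis = Orig ` exis \<Phi> \<union> (\<lambda>(e, \<sigma>). Arb e \<sigma>) ` A,
       dep = (\<lambda>x. case x of Orig e \<Rightarrow> Orig ` dep \<Phi> e | Arb _ _ \<Rightarrow> {}),
       matrix = (\<lambda>C. lift_lit ` C) ` matrix \<Phi> \<union> arbiter_clauses A \<rparr>"

end

theory Submission
  imports Defs
begin

text \<open>
  Since the matrix of \<open>\<Phi>'\<close> contains a copy
  of \<open>\<phi>\<close>, the original existentials of a model of \<open>\<Phi>'\<close> form a model of \<open>\<Phi>\<close>.
  Conversely, a model \<open>F\<close> of \<open>\<Phi>\<close> is extended by giving each arbiter \<open>e\<^sup>\<sigma>\<close> the constant
  value \<open>F\<^sub>e(\<sigma>)\<close>: under a universal assignment that falsifies \<open>\<sigma>\<close> both arbiter clauses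
  are satisfied by \<open>\<not>\<sigma>\<close>, and under one that extends \<open>\<sigma>\<close> (which lies in \<open>[D(e)]\<close>)
  the variable \<open>e\<close> takes the value \<open>F\<^sub>e(\<sigma>)\<close>, equal to that of \<open>e\<^sup>\<sigma>\<close>.
\<close>

lemma map_le_restrict_dom: "\<sigma> \<subseteq>\<^sub>m \<beta> \<Longrightarrow> \<beta> |` dom \<sigma> = \<sigma>"
  by (rule ext) (auto simp: map_le_def restrict_map_def domIff)

lemma map_add_skolem_assign_restrict:
  assumes "dep \<Phi> e \<inter> exis \<Phi> = {}"
  shows "(\<sigma> ++ skolem_assign \<Phi> F \<sigma>) |` dep \<Phi> e = \<sigma> |` dep \<Phi> e"
  using assms by (auto simp: restrict_map_def map_add_def skolem_assign_def fun_eq_iff)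

lemma sat_cnf_Un: "sat_cnf \<alpha> (\<phi> \<union> \<psi>) \<longleftrightarrow> sat_cnf \<alpha> \<phi> \<and> sat_cnf \<alpha> \<psi>"
  by (auto simp: sat_cnf_def)

lemma sat_clause_neg_term_iff:
  assumes "dom \<sigma> \<subseteq> dom \<alpha>"
  shows "sat_clause \<alpha> (neg_term \<sigma>) \<longleftrightarrow> \<not> \<sigma> \<subseteq>\<^sub>m \<alpha>"
proof
  assume "sat_clause \<alpha> (neg_term \<sigma>)"
  then obtain v b where "\<sigma> v = Some b" "\<alpha> v = Some (\<not> b)"
    by (auto simp: sat_clause_def sat_lit_def neg_term_def)
  then show "\<not> \<sigma> \<subseteq>\<^sub>m \<alpha>" by (force simp: map_le_def)
next
  assume "\<not> \<sigma> \<subseteq>\<^sub>m \<alpha>"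
  then obtain v b where v: "\<sigma> v = Some b" "\<alpha> v \<noteq> Some b"
    by (auto simp: map_le_def)
  with assms obtain c where "\<alpha> v = Some c" by blast
  with v have "\<alpha> v = Some (\<not> b)" by auto
  with v show "sat_clause \<alpha> (neg_term \<sigma>)"
    by (auto simp: sat_clause_def sat_lit_def neg_term_def)
qed

definition unlift_assign :: "'v avar assign \<Rightarrow> 'v assign" where
  "unlift_assign \<tau> = (\<lambda>v. \<tau> (Orig v))"

lemma unlift_lift_assign [simp]: "unlift_assign (lift_assign \<sigma>) = \<sigma>"
  by (simp add: unlift_assign_def lift_assign_def)

lemma lift_unlift_assign:
  assumes "\<And>e s. \<tau> (Arb e s) = None"
  shows "lift_assign (unlift_assign \<tau>) = \<tau>"
  using assms by (auto simp: fun_eq_iff unlift_assign_def lift_assign_def split: avar.split)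

lemma dom_lift_assign: "dom (lift_assign \<sigma>) = Orig ` dom \<sigma>"
proof (intro set_eqI iffI)
  fix x assume "x \<in> dom (lift_assign \<sigma>)"
  then show "x \<in> Orig ` dom \<sigma>" by (cases x) (auto simp: lift_assign_def)
qed (auto simp: lift_assign_def)

lemma lift_assign_restrict: "lift_assign \<sigma> |` (Orig ` D) = lift_assign (\<sigma> |` D)"
  by (auto simp: lift_assign_def restrict_map_def fun_eq_iff split: avar.split)

lemma assignments_Orig_image: "assignments (Orig ` U) = lift_assign ` assignments U"
proof (intro set_eqI iffI)
  fix \<tau> assume "\<tau> \<in> assignments (Orig ` U)"
  then have dom: "dom \<tau> = Orig ` U" by (simp add: assignments_def)
  then have "\<tau> (Arb e s) = None" for e s by blast
  then have "\<tau> = lift_assign (unlift_assign \<tau>)" by (simp add: lift_unlift_assign)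
  moreover have "dom (unlift_assign \<tau>) = U"
    using dom by (auto simp: unlift_assign_def)
  ultimately show "\<tau> \<in> lift_assign ` assignments U" by (auto simp: assignments_def)
next
  fix \<tau> assume "\<tau> \<in> lift_assign ` assignments U"
  then obtain \<sigma> where "dom \<sigma> = U" "\<tau> = lift_assign \<sigma>"
    by (auto simp: assignments_def)
  then show "\<tau> \<in> assignments (Orig ` U)" by (simp add: assignments_def dom_lift_assign)
qed

lemma neg_term_lift_assign: "neg_term (lift_assign \<sigma>) = lift_lit ` neg_term \<sigma>"
proof (intro set_eqI iffI)
  fix l assume "l \<in> neg_term (lift_assign \<sigma>)"
  then obtain x b where "l = (x, \<not> b)" "lift_assign \<sigma> x = Some b"
    by (auto simp: neg_term_def)
  then show "l \<in> lift_lit ` neg_term \<sigma>"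
    by (cases x) (force simp: lift_assign_def lift_lit_def neg_term_def)+
qed (auto simp: neg_term_def lift_assign_def lift_lit_def)

lemma sat_clause_lift_iff: "sat_clause \<alpha> (lift_lit ` C) \<longleftrightarrow> sat_clause (unlift_assign \<alpha>) C"
  by (auto simp: sat_clause_def sat_lit_def lift_lit_def unlift_assign_def)

lemma sat_cnf_lift_iff:
  "sat_cnf \<alpha> ((\<lambda>C. lift_lit ` C) ` \<phi>) \<longleftrightarrow> sat_cnf (unlift_assign \<alpha>) \<phi>"
  by (simp add: sat_cnf_def sat_clause_lift_iff)

lemma sat_cnf_arbiter_clausesI:
  assumes dom: "\<And>e \<sigma>. (e, \<sigma>) \<in> A \<Longrightarrow> dom \<sigma> \<subseteq> dom (unlift_assign \<alpha>)"
    and agree: "\<And>e \<sigma>. (e, \<sigma>) \<in> A \<Longrightarrow> \<sigma> \<subseteq>\<^sub>m unlift_assign \<alpha> \<Longrightarrow>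
                  \<alpha> (Orig e) \<noteq> None \<and> \<alpha> (Arb e \<sigma>) = \<alpha> (Orig e)"
  shows "sat_cnf \<alpha> (arbiter_clauses A)"
  unfolding sat_cnf_def
proof
  fix C assume "C \<in> arbiter_clauses A"
  then obtain e \<sigma> b where A: "(e, \<sigma>) \<in> A"
    and C: "C = insert (Arb e \<sigma>, b) (insert (Orig e, \<not> b) (lift_lit ` neg_term \<sigma>))"
    by (auto simp: arbiter_clauses_def neg_term_lift_assign)
  show "sat_clause \<alpha> C"
  proof (cases "\<sigma> \<subseteq>\<^sub>m unlift_assign \<alpha>")
    case True
    with agree[OF A] show ?thesis
      by (cases "\<alpha> (Orig e)") (auto simp: C sat_clause_def sat_lit_def)
  next
    case False
    with dom[OF A] have "sat_clause \<alpha> (lift_lit ` neg_term \<sigma>)"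
      by (simp add: sat_clause_lift_iff sat_clause_neg_term_iff)
    then show ?thesis by (auto simp: C sat_clause_def)
  qed
qed

lemma univ_add_arbiters [simp]: "univ (add_arbiters \<Phi> A) = Orig ` univ \<Phi>"
  by (simp add: add_arbiters_def)

lemma matrix_add_arbiters [simp]:
  "matrix (add_arbiters \<Phi> A) = (\<lambda>C. lift_lit ` C) ` matrix \<Phi> \<union> arbiter_clauses A"
  by (simp add: add_arbiters_def)

definition skolem_drop_arbiters ::
    "('v avar \<Rightarrow> 'v avar assign \<Rightarrow> bool) \<Rightarrow> 'v \<Rightarrow> 'v assign \<Rightarrow> bool" where
  "skolem_drop_arbiters F' e \<sigma> = F' (Orig e) (lift_assign \<sigma>)"

definition skolem_add_arbiters ::
    "('v \<Rightarrow> 'v assign \<Rightarrow> bool) \<Rightarrow> 'v avar \<Rightarrow> 'v avar assign \<Rightarrow> bool" where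
  "skolem_add_arbiters F x \<tau> = (case x of Orig e \<Rightarrow> F e (unlift_assign \<tau>) | Arb e \<sigma> \<Rightarrow> F e \<sigma>)"

lemma skolem_drop_add_arbiters [simp]: "skolem_drop_arbiters (skolem_add_arbiters F) = F"
  by (simp add: fun_eq_iff skolem_drop_arbiters_def skolem_add_arbiters_def)

lemma unlift_skolem_assign_add_arbiters:
  "unlift_assign (lift_assign \<sigma> ++ skolem_assign (add_arbiters \<Phi> A) F' (lift_assign \<sigma>))
     = \<sigma> ++ skolem_assign \<Phi> (skolem_drop_arbiters F') \<sigma>"
proof
  fix v
  have "lift_assign \<sigma> |` dep (add_arbiters \<Phi> A) (Orig v) = lift_assign (\<sigma> |` dep \<Phi> v)"
    by (simp add: add_arbiters_def lift_assign_restrict)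
  then show "unlift_assign (lift_assign \<sigma> ++ skolem_assign (add_arbiters \<Phi> A) F' (lift_assign \<sigma>)) v
      = (\<sigma> ++ skolem_assign \<Phi> (skolem_drop_arbiters F') \<sigma>) v"
    by (auto simp: unlift_assign_def map_add_def skolem_assign_def add_arbiters_def
        skolem_drop_arbiters_def lift_assign_def)
qed

lemma skolem_assign_add_arbiters_Arb:
  assumes "(e, s) \<in> A"
  shows "(lift_assign \<sigma> ++ skolem_assign (add_arbiters \<Phi> A) F' (lift_assign \<sigma>)) (Arb e s)
           = Some (F' (Arb e s) Map.empty)"
  using assms by (force simp: map_add_def skolem_assign_def add_arbiters_def)

lemma is_model_add_arbiters_iff:
  "is_model (add_arbiters \<Phi> A) F' \<longleftrightarrow>
     is_model \<Phi> (skolem_drop_arbiters F') \<and>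
     (\<forall>\<sigma>\<in>assignments (univ \<Phi>).
        sat_cnf (lift_assign \<sigma> ++ skolem_assign (add_arbiters \<Phi> A) F' (lift_assign \<sigma>))
          (arbiter_clauses A))"
  by (auto simp: is_model_def assignments_Orig_image sat_cnf_Un sat_cnf_lift_iff
      unlift_skolem_assign_add_arbiters)

lemma is_model_skolem_add_arbiters:
  assumes wf: "wf_dqbf \<Phi>" and A: "A \<subseteq> arbiter_index \<Phi>" and F: "is_model \<Phi> F"
  shows "is_model (add_arbiters \<Phi> A) (skolem_add_arbiters F)"
  unfolding is_model_add_arbiters_iff skolem_drop_add_arbiters
proof (intro conjI F ballI)
  fix \<sigma> assume \<sigma>: "\<sigma> \<in> assignments (univ \<Phi>)"
  define \<alpha> where "\<alpha> = lift_assign \<sigma> ++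
    skolem_assign (add_arbiters \<Phi> A) (skolem_add_arbiters F) (lift_assign \<sigma>)"
  have \<beta>: "unlift_assign \<alpha> = \<sigma> ++ skolem_assign \<Phi> F \<sigma>"
    by (simp add: \<alpha>_def unlift_skolem_assign_add_arbiters)
  show "sat_cnf \<alpha> (arbiter_clauses A)"
  proof (rule sat_cnf_arbiter_clausesI)
    fix e s assume es: "(e, s) \<in> A"
    then have e: "e \<in> exis \<Phi>" and dom_s: "dom s = dep \<Phi> e"
      using A by (auto simp: arbiter_index_def assignments_def)
    have dep: "dep \<Phi> e \<subseteq> univ \<Phi>" "dep \<Phi> e \<inter> exis \<Phi> = {}"
      using wf e by (auto simp: wf_dqbf_def)
    show "dom s \<subseteq> dom (unlift_assign \<alpha>)"
      using \<sigma> dep by (auto simp: \<beta> dom_s assignments_def)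
    assume "s \<subseteq>\<^sub>m unlift_assign \<alpha>"
    then have "s = \<sigma> |` dep \<Phi> e"
      using map_le_restrict_dom map_add_skolem_assign_restrict[OF dep(2)] by (metis \<beta> dom_s)
    then have "\<alpha> (Orig e) = Some (F e s)"
      using e fun_cong[OF \<beta>, of e] by (simp add: unlift_assign_def skolem_assign_def)
    moreover have "\<alpha> (Arb e s) = Some (F e s)"
      using es by (simp add: \<alpha>_def skolem_assign_add_arbiters_Arb skolem_add_arbiters_def)
    ultimately show "\<alpha> (Orig e) \<noteq> None \<and> \<alpha> (Arb e s) = \<alpha> (Orig e)" by simp
  qed
qed

theorem lemma10:
  fixes \<Phi> :: "'v dqbf" and A :: "('v \<times> ('v \<rightharpoonup> bool)) set"
  assumes "wf_dqbf \<Phi>"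
    and "A \<subseteq> arbiter_index \<Phi>"
  shows "dqbf_true \<Phi> \<longleftrightarrow> dqbf_true (add_arbiters \<Phi> A)"
proof
  assume "dqbf_true \<Phi>"
  then obtain F where "is_model \<Phi> F" by (auto simp: dqbf_true_def)
  have "is_model (add_arbiters \<Phi> A) (skolem_add_arbiters F)"
    using assms \<open>is_model \<Phi> F\<close> by (rule is_model_skolem_add_arbiters)
  then show "dqbf_true (add_arbiters \<Phi> A)" by (auto simp: dqbf_true_def)
next
  assume "dqbf_true (add_arbiters \<Phi> A)"
  then obtain F' where "is_model (add_arbiters \<Phi> A) F'" by (auto simp: dqbf_true_def)
  then have "is_model \<Phi> (skolem_drop_arbiters F')" by (simp add: is_model_add_arbiters_iff)
  then show "dqbf_true \<Phi>" by (auto simp: dqbf_true_def)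
qed

end
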